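(* Let the Algorithm and assumptions (A1)–(A4) be as in the context, with constants $L_H,K_H,\delta_g,\delta_H,\nu$, and assume $\sigma_0\le2\gamma L_H$. Suppose the algorithm does not terminate at the $N$-th iteration and that for every iteration $k$, $\delta_g\le\frac{9\delta_H^2}{4\sigma_k}$ and \[ \delta_H\le\min\Big\{\min\{\tfrac1{18},\tfrac{1-\rho_{TH}}{9}\}\big(\sqrt{K_H^2+4\sigma_k\varepsilon_g}-K_H\big),\ \min\{\tfrac19,\tfrac{2(1-\rho_{TH})}{9}\}\nu\varepsilon_H\Big\}. \] Assume $f$ attains its minimum $f_{\min}$ over $\mathcal M$. Let $\mathcal N_{succ}$ be the set of successful iterations (those $k$ with $\rho_k\ge\rho_{TH}$) performed before termination. Then \[ |\mathcal N_{succ}|\le\frac{f(x_0)-f_{\min}}{\rho_{TH}\kappa_\sigma}\max\{\varepsilon_g^{-2},\varepsilon_H^{-3}\}+1, \qquad \kappa_\sigma:=\min\Big\{\frac{\nu^3}{24\gamma^2L_H^2},\ \frac1{2\sqrt3}\min\Big\{\frac1{K_H},\frac1{\sqrt{2\gamma L_H}}\Big\}\Big\}. \]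
   Context: Let $\mathcal M$ be a connected complete Riemannian manifold; $\langle\cdot,\cdot\rangle$ and $\|\cdot\|$ denote the inner product and norm on tangent spaces $T_x\mathcal M$. Let $f=\frac1n\sum_{i=1}^n f_i$ with each $f_i:\mathcal M\to\mathbb R$ twice continuously differentiable; $\mathrm{grad} f$ is the Riemannian gradient. A retraction is a smooth map $R:T\mathcal M\to\mathcal M$ whose restriction $R_x$ to $T_x\mathcal M$ satisfies $R_x(0_x)=x$, $DR_x(0_x)=\mathrm{Id}$. $\nabla^2 f\circ R_x(0_x)$ is the Hessian at $0_x$ of $f\circ R_x$ on the inner-product space $T_x\mathcal M$. $\lambda_{\min}(H)$ denotes the smallest eigenvalue of a self-adjoint operator $H$. Algorithm: fix $\varepsilon_g,\varepsilon_H,\rho_{TH}\in(0,1)$, $\gamma>1$, $x_0\in\mathcal M$, $\sigma_0>0$. At iteration $k$: construct $G_k\in T_{x_k}\mathcal M$ and self-adjoint linear $H_k$ on $T_{x_k}\mathcal M$; if $\|G_k\|\le\varepsilon_g$ and $\lambda_{\min}(H_k)\ge-\varepsilon_H$, stop; otherwise choose $\eta_k\in T_{x_k}\mathcal M$ approximately minimizing $m_k(\eta):=\langle G_k,\eta\rangle+\frac12\langle H_k[\eta],\eta\rangle+\frac13\sigma_k\|\eta\|^3$, set $\rho_k=\frac{f(x_k)-f\circ R_{x_k}(\eta_k)}{-m_k(\eta_k)}$; if $\rho_k\ge\rho_{TH}$ (successful iteration) set $x_{k+1}=R_{x_k}(\eta_k)$, $\sigma_{k+1}=\sigma_k/\gamma$,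 else (unsuccessful) $x_{k+1}=x_k$, $\sigma_{k+1}=\gamma\sigma_k$. Cauchy point and eigenpoint: $\eta_k^C:=-\alpha^C G_k$ with $\alpha^C\in\arg\min_{\alpha\ge0}m_k(-\alpha G_k)$. Fix $\nu\in(0,1)$. When $\lambda_{\min}(H_k)<0$, $\eta_k^E:=\alpha^E u_k$ where $u_k$ satisfies $\langle u_k,H_k[u_k]\rangle\le\nu\lambda_{\min}(H_k)\|u_k\|^2<0$ and $\langle G_k,u_k\rangle\le0$, and $\alpha^E\in\arg\min_{\alpha\ge0}m_k(\alpha u_k)$. Assumptions: (A1) there is $L_H>0$ with $\big|f\circ R_{x_k}(\eta_k)-f(x_k)-\langle\mathrm{grad} f(x_k),\eta_k\rangle-\frac12\langle\nabla^2 f\circ R_{x_k}(0_{x_k})[\eta_k],\eta_k\rangle\big|\le\frac12L_H\|\eta_k\|^3$ for all $k$. (A2) there is $K_H>0$ with $\|H_k\|:=\sup_{\|\eta\|\le1}\langle\eta,H_k[\eta]\rangle\le K_H$ for all $k$. (A3) there are $\delta_g,\delta_H\in(0,1)$ with $\|G_k-\mathrm{grad} f(x_k)\|\le\delta_g$ and $\|(H_k-\nabla^2 f\circ R_{x_k}(0_{x_k}))[\eta_k]\|\le\delta_H\|\eta_k\|$ for all $k$. (A4) for all $k$, $-m_k(\eta_k)\ge-m_k(\eta_k^C)$, and $-m_k(\eta_k)\ge-m_k(\eta_k^E)$ whenever $\lambda_{\min}(H_k)<0$. *)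

theory Defs
  imports "HOL-Analysis.Analysis"
begin

text \<open>Tangent spaces are modelled (via a pointwise orthonormal frame) by a fixed
Euclidean space 'v; the retraction is R :: 'm \<Rightarrow> 'v \<Rightarrow> 'm.\<close>

definition grad_at :: "('v::euclidean_space \<Rightarrow> real) \<Rightarrow> 'v \<Rightarrow> 'v" where
  "grad_at phi v = (THE g. (phi has_derivative (\<lambda>h. g \<bullet> h)) (at v))"

definition hess_at :: "('v::euclidean_space \<Rightarrow> real) \<Rightarrow> 'v \<Rightarrow> ('v \<Rightarrow> 'v)" where
  "hess_at phi v = (THE H. (grad_at phi has_derivative H) (at v))"

text \<open>Riemannian gradient grad f(x) (= gradient of f o R_x at 0_x since DR_x(0_x) = Id)
and Hessian of f o R_x at 0_x.\<close>

definition rgrad :: "('m \<Rightarrow> real) \<Rightarrow> ('m \<Rightarrow> 'v::euclidean_space \<Rightarrow> 'm) \<Rightarrow> 'm \<Rightarrow> 'v" where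
  "rgrad f R x = grad_at (\<lambda>v. f (R x v)) 0"

definition rhess :: "('m \<Rightarrow> real) \<Rightarrow> ('m \<Rightarrow> 'v::euclidean_space \<Rightarrow> 'm) \<Rightarrow> 'm \<Rightarrow> ('v \<Rightarrow> 'v)" where
  "rhess f R x = hess_at (\<lambda>v. f (R x v)) 0"

definition self_adjoint :: "('v::euclidean_space \<Rightarrow> 'v) \<Rightarrow> bool" where
  "self_adjoint H \<longleftrightarrow> linear H \<and> (\<forall>u w. H u \<bullet> w = u \<bullet> H w)"

definition lambda_min :: "('v::euclidean_space \<Rightarrow> 'v) \<Rightarrow> real" where
  "lambda_min H = Min {l. \<exists>u. u \<noteq> 0 \<and> H u = l *\<^sub>R u}"

definition cmodel :: "'v::euclidean_space \<Rightarrow> ('v \<Rightarrow> 'v) \<Rightarrow> real \<Rightarrow> 'v \<Rightarrow> real" where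
  "cmodel G H s eta = G \<bullet> eta + 1/2 * (H eta \<bullet> eta) + 1/3 * s * norm eta ^ 3"

end

theory Submission
  imports Defs
begin

text \<open>Every non-terminal iteration has either a large gradient estimate, where the Cauchy point
  yields model decrease at least t |G| - K t^2/2 - sigma t^3/3 for every t \<ge> 0, or sufficiently
  negative curvature, where the eigenpoint yields decrease (nu eps_H)^3 / (6 sigma^2).
  By (A1) and (A3) the actual reduction falls short of the model decrease by at most
  delta_g r + delta_H r^2/2 + (L_H/2 - sigma/3) r^3 with r = |eta|; once sigma \<ge> 2 L_H this is at
  most 243 delta_H^3 / (4 sigma^2), which the tolerance assumptions bound by 1 - rho_TH times the
  model decrease. So every iteration with sigma \<ge> 2 L_H is successful, sigma never exceeds
  2 gamma L_H, and each successful iteration lowers f by at least rho_TH kappa min(eps_g^2, eps_H^3),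
  which can happen only finitely often above f_min.\<close>

lemma cubic_attains_min_nonneg:
  fixes c1 c2 c3 :: real
  assumes c3: "0 < c3"
  obtains a where "0 \<le> a" "\<forall>b\<ge>0. c1*a + c2*a^2 + c3*a^3 \<le> c1*b + c2*b^2 + c3*b^3"
proof -
  define p where "p b = c1*b + c2*b^2 + c3*b^3" for b :: real
  define T where "T = 1 + (\<bar>c1\<bar> + \<bar>c2\<bar>) / c3"
  have T: "1 \<le> T" using c3 by (simp add: T_def)
  have "continuous_on {0..T} p" unfolding p_def by (intro continuous_intros)
  then obtain a where a: "a \<in> {0..T}" "\<forall>y\<in>{0..T}. p a \<le> p y"
    using continuous_attains_inf[of "{0..T}" p] T by auto
  have p_pos: "0 < p b" if b: "T < b" for b
  proof -
    have b1: "1 \<le> b" using b T by simp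
    have "\<bar>c1\<bar> + \<bar>c2\<bar> < c3 * b" using b c3 unfolding T_def by (simp add: field_simps)
    hence "(\<bar>c1\<bar> + \<bar>c2\<bar>) * b^2 < c3 * b * b^2" using b1 by (intro mult_strict_right_mono) auto
    moreover have "\<bar>c1\<bar> * b \<le> \<bar>c1\<bar> * b^2" using b1 by (intro mult_left_mono) (auto simp: power2_eq_square)
    moreover have "- c1 * b \<le> \<bar>c1\<bar> * b" using b1 by (intro mult_right_mono) auto
    moreover have "- c2 * b^2 \<le> \<bar>c2\<bar> * b^2" by (intro mult_right_mono) auto
    ultimately show ?thesis unfolding p_def by (simp add: power3_eq_cube power2_eq_square algebra_simps)
  qed
  have "p a \<le> p b" if "0 \<le> b" for b
  proof (cases "b \<le> T")
    case True
    thus ?thesis using a that by auto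
  next
    case False
    have "p a \<le> p 0" using a T by auto
    thus ?thesis using p_pos[of b] False by (simp add: p_def)
  qed
  thus ?thesis using that a unfolding p_def by auto
qed

lemma cmodel_scaleR:
  assumes "linear H"
  shows "cmodel G H s (b *\<^sub>R d) = b * (G \<bullet> d) + b^2/2 * (H d \<bullet> d) + s/3 * \<bar>b\<bar>^3 * norm d ^ 3"
  unfolding cmodel_def using linear_cmul[OF assms]
  by (simp add: power2_eq_square power_mult_distrib)

text \<open>The hypothesis on eta would be vacuous if the ray had no minimiser; it has one because
  along the ray the model is a cubic with positive leading coefficient.\<close>

lemma cmodel_le_on_ray:
  fixes d eta :: "'v::euclidean_space"
  assumes lin: "linear H" and s: "0 < s" and d: "d \<noteq> 0"
    and better: "\<forall>a\<ge>0. (\<forall>b\<ge>0. cmodel G H s (a *\<^sub>R d) \<le> cmodel G H s (b *\<^sub>R d))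
                   \<longrightarrow> - cmodel G H s (a *\<^sub>R d) \<le> - cmodel G H s eta"
    and b: "0 \<le> b"
  shows "cmodel G H s eta \<le> cmodel G H s (b *\<^sub>R d)"
proof -
  have ray: "cmodel G H s (c *\<^sub>R d) = (G \<bullet> d) * c + (H d \<bullet> d / 2) * c^2 + (s/3 * norm d ^ 3) * c^3"
    if "0 \<le> c" for c
    using cmodel_scaleR[OF lin, of G s c d] that by (simp add: algebra_simps)
  have "0 < s/3 * norm d ^ 3" using s d by simp
  then obtain a where "0 \<le> a" "\<forall>c\<ge>0. cmodel G H s (a *\<^sub>R d) \<le> cmodel G H s (c *\<^sub>R d)"
    using cubic_attains_min_nonneg[of _ "G \<bullet> d" "H d \<bullet> d / 2"] ray by metis
  thus ?thesis using better b by force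
qed

lemma quadratic_form_le_norm_sq:
  fixes w :: "'v::euclidean_space"
  assumes lin: "linear H" and K: "\<forall>v. norm v \<le> 1 \<longrightarrow> v \<bullet> H v \<le> K"
  shows "H w \<bullet> w \<le> K * norm w ^ 2"
proof (cases "w = 0")
  case True
  thus ?thesis using linear_0[OF lin] by simp
next
  case False
  define c where "c = 1 / norm w"
  have "norm (c *\<^sub>R w) \<le> 1" using False by (simp add: c_def)
  hence "(c *\<^sub>R w) \<bullet> H (c *\<^sub>R w) \<le> K" using K by blast
  hence "c^2 * (H w \<bullet> w) \<le> K" using linear_cmul[OF lin] by (simp add: inner_commute power2_eq_square)
  thus ?thesis using False by (simp add: c_def field_simps power2_eq_square)
qed

lemma cauchy_point_decrease:
  fixes G eta :: "'v::euclidean_space"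
  assumes lin: "linear H" and s: "0 < s" and G: "G \<noteq> 0"
    and K: "\<forall>v. norm v \<le> 1 \<longrightarrow> v \<bullet> H v \<le> K"
    and better: "\<forall>a\<ge>0. (\<forall>b\<ge>0. cmodel G H s (- (a *\<^sub>R G)) \<le> cmodel G H s (- (b *\<^sub>R G)))
                   \<longrightarrow> - cmodel G H s (- (a *\<^sub>R G)) \<le> - cmodel G H s eta"
    and t: "0 \<le> t"
  shows "t * norm G - t^2/2 * K - s/3 * t^3 \<le> - cmodel G H s eta"
proof -
  define g where "g = norm G"
  have g: "0 < g" using G by (simp add: g_def)
  have "cmodel G H s eta \<le> cmodel G H s ((t / g) *\<^sub>R (- G))"
    using better t g by (intro cmodel_le_on_ray[OF lin s]) (auto simp: G)
  also have "\<dots> = - t * g + (t / g)^2 / 2 * (H G \<bullet> G) + s/3 * t^3"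
    using cmodel_scaleR[OF lin, of G s "t / g" "- G"] linear_neg[OF lin] t g
    by (simp add: g_def power2_norm_eq_inner[symmetric] power_divide power2_eq_square)
  also have "(t / g)^2 / 2 * (H G \<bullet> G) \<le> (t / g)^2 / 2 * (K * g^2)"
    using quadratic_form_le_norm_sq[OF lin K, of G] by (intro mult_left_mono) (auto simp: g_def)
  also have "(t / g)^2 / 2 * (K * g^2) = t^2/2 * K" using g by (simp add: power_divide)
  finally show ?thesis by (simp add: g_def)
qed

lemma eigenpoint_decrease:
  fixes G u eta :: "'v::euclidean_space"
  assumes lin: "linear H" and s: "0 < s" and u: "u \<noteq> 0" and Gu: "G \<bullet> u \<le> 0"
    and better: "\<forall>a\<ge>0. (\<forall>b\<ge>0. cmodel G H s (a *\<^sub>R u) \<le> cmodel G H s (b *\<^sub>R u))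
                   \<longrightarrow> - cmodel G H s (a *\<^sub>R u) \<le> - cmodel G H s eta"
    and b: "0 \<le> b"
  shows "b^2/2 * (- (H u \<bullet> u)) - s/3 * b^3 * norm u ^ 3 \<le> - cmodel G H s eta"
proof -
  have "cmodel G H s eta \<le> cmodel G H s (b *\<^sub>R u)"
    by (rule cmodel_le_on_ray[OF lin s u better b])
  moreover have "b * (G \<bullet> u) \<le> 0" using Gu b by (simp add: mult_nonneg_nonpos)
  ultimately show ?thesis using cmodel_scaleR[OF lin, of G s b u] b by simp
qed

lemma cauchy_cubic_ge_eps_sq:
  fixes D g K s S eps :: real
  assumes D: "\<forall>t\<ge>0. t*g - t^2/2*K - s/3*t^3 \<le> D"
    and eps: "eps < g" "0 < eps" "eps < 1" and K: "0 < K" and s: "0 < s" "s \<le> S"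
  shows "1 / (2 * sqrt 3) * min (1/K) (1 / sqrt S) * eps^2 \<le> D"
proof -
  define mu where "mu = min (1/K) (1 / sqrt S)"
  have mu: "0 < mu" using K s by (simp add: mu_def)
  have muK: "mu * K \<le> 1" using K by (simp add: mu_def min_def field_simps)
  have "mu^2 \<le> (1 / sqrt S)^2" using mu by (intro power_mono) (auto simp: mu_def)
  hence "s * mu^2 \<le> S * (1 / sqrt S)^2" using s by (intro mult_mono) auto
  hence smu: "s * mu^2 \<le> 1" using s by (simp add: power_divide)
  define t where "t = mu * eps / 2"
  have t: "0 \<le> t" using mu eps by (simp add: t_def)
  have "t * eps \<le> t * g" using t eps by (intro mult_left_mono) auto
  hence "mu * eps^2 / 2 \<le> t * g" by (simp add: t_def power2_eq_square)
  moreover have "t^2/2*K \<le> mu * eps^2 / 8"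
  proof -
    have "t^2/2*K = (mu*K) * (mu * eps^2 / 8)" by (simp add: t_def power2_eq_square)
    also have "\<dots> \<le> mu * eps^2 / 8" by (rule mult_left_le_one_le) (use mu K muK in auto)
    finally show ?thesis .
  qed
  moreover have "s/3*t^3 \<le> mu * eps^2 / 24"
  proof -
    have "s/3*t^3 = (s*mu^2) * (mu * eps^3 / 24)" by (simp add: t_def power3_eq_cube power2_eq_square)
    also have "\<dots> \<le> mu * eps^3 / 24" by (rule mult_left_le_one_le) (use mu eps s smu in auto)
    also have "\<dots> \<le> mu * eps^2 / 24" using mu eps by (simp add: power_decreasing)
    finally show ?thesis .
  qed
  moreover have "t*g - t^2/2*K - s/3*t^3 \<le> D" using D t by blast
  ultimately have "mu * eps^2 / 3 \<le> D" by linarith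
  moreover have "1 / (2 * sqrt 3) \<le> 1/3"
    using real_sqrt_le_iff[of 9 12] by (simp add: real_sqrt_mult[of 4 3, simplified] field_simps)
  hence "1 / (2 * sqrt 3) * (mu * eps^2) \<le> 1/3 * (mu * eps^2)" using mu by (intro mult_right_mono) auto
  ultimately show ?thesis by (simp add: mu_def mult.assoc)
qed

lemma cauchy_cubic_ge_root_cube:
  fixes D g K s eps :: real
  assumes D: "\<forall>t\<ge>0. t*g - t^2/2*K - s/3*t^3 \<le> D"
    and eps: "eps < g" "0 < eps" and K: "0 < K" and s: "0 < s"
  shows "(sqrt (K^2 + 4 * s * eps) - K)^3 / (12 * s^2) \<le> D"
proof -
  define v where "v = sqrt (K^2 + 4 * s * eps) - K"
  have "sqrt (K^2) \<le> sqrt (K^2 + 4 * s * eps)" using s eps by (intro real_sqrt_le_mono) auto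
  hence v: "0 \<le> v" using K by (simp add: v_def)
  have "(sqrt (K^2 + 4 * s * eps))^2 = K^2 + 4 * s * eps" using s eps by simp
  hence vv: "4 * s * eps = v^2 + 2 * K * v" unfolding v_def by (simp add: power2_eq_square algebra_simps)
  define t where "t = v / (2 * s)" \<comment> \<open>the positive root of s t^2 + K t = eps\<close>
  have t: "0 \<le> t" using v s by (simp add: t_def)
  have "t * eps \<le> t * g" using t eps by (intro mult_left_mono) auto
  moreover have "t * eps = v * (4 * s * eps) / (8 * s^2)"
    using s by (simp add: t_def power2_eq_square field_simps)
  moreover have "v * (v^2 + 2 * K * v) / (8 * s^2) = 1/8 * (v^3 / s^2) + 1/4 * (K * v^2 / s^2)"
    using s by (simp add: field_simps power2_eq_square power3_eq_cube)
  moreover have "t^2/2*K = 1/8 * (K * v^2 / s^2)" by (simp add: t_def power2_eq_square field_simps)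
  moreover have "s/3*t^3 = 1/24 * (v^3 / s^2)"
    using s by (simp add: t_def power3_eq_cube power2_eq_square field_simps)
  moreover have "0 \<le> K * v^2 / s^2" using K by simp
  moreover have "t*g - t^2/2*K - s/3*t^3 \<le> D" using D t by blast
  ultimately have "1/12 * (v^3 / s^2) \<le> D" unfolding vv by linarith
  thus ?thesis by (simp add: v_def)
qed

lemma eigen_cubic_ge_cube:
  fixes D q n c s :: real
  assumes D: "\<forall>b\<ge>0. b^2/2 * q - s/3 * b^3 * n^3 \<le> D"
    and n: "0 < n" and q: "c * n^2 \<le> q" and c: "0 \<le> c" and s: "0 < s"
  shows "c^3 / (6 * s^2) \<le> D"
proof -
  define b where "b = c / (s * n)"
  have b: "0 \<le> b" using c s n by (simp add: b_def)
  have "b^2/2 * (c * n^2) \<le> b^2/2 * q" using q by (intro mult_left_mono) auto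
  moreover have "b^2/2 * (c * n^2) = c^3/(2 * s^2)"
    using s n by (simp add: b_def field_simps power2_eq_square power3_eq_cube)
  moreover have "s/3 * b^3 * n^3 = c^3/(3 * s^2)"
    using s n by (simp add: b_def field_simps power2_eq_square power3_eq_cube)
  ultimately have "c^3/(2 * s^2) - c^3/(3 * s^2) \<le> D" using D b by force
  thus ?thesis by (simp add: field_simps)
qed

lemma cubic_error_le:
  fixes dg dH r s :: real
  assumes dg: "dg \<le> 9 * dH^2 / (4 * s)" and s: "0 < s" and dH: "0 < dH" and r: "0 \<le> r"
  shows "dg * r + dH/2 * r^2 - s/12 * r^3 \<le> 243/4 * dH^3 / s^2"
proof -
  define X where "X = dH^3 / s^2"
  have dg_r: "dg * r \<le> 9 * dH^2 / (4 * s) * r" using dg r by (intro mult_right_mono) auto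
  show ?thesis
  proof (cases "s * r \<le> 9 * dH")
    case True
    hence rr: "r \<le> 9 * dH / s" using s by (simp add: field_simps)
    have "9 * dH^2 / (4 * s) * r \<le> 9 * dH^2 / (4 * s) * (9 * dH / s)"
      using rr s by (intro mult_left_mono) auto
    also have "\<dots> = 81/4 * X" using s by (simp add: X_def field_simps power2_eq_square power3_eq_cube)
    finally have "dg * r \<le> 81/4 * X" using dg_r by linarith
    moreover have "r^2 \<le> (9 * dH / s)^2" using rr r by (intro power_mono) auto
    hence "dH/2 * r^2 \<le> dH/2 * (9 * dH / s)^2" using dH by (intro mult_left_mono) auto
    hence "dH/2 * r^2 \<le> 81/2 * X" by (simp add: X_def power_divide power2_eq_square power3_eq_cube)
    moreover have "0 \<le> s/12 * r^3" using s r by simp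
    ultimately show ?thesis unfolding X_def by linarith
  next
    case False
    hence d: "dH \<le> s * r / 9" by simp
    have "dH^2 \<le> (s * r / 9)^2" using d dH by (intro power_mono) auto
    hence "9 * dH^2 / (4 * s) * r \<le> 9 * (s * r / 9)^2 / (4 * s) * r"
      using s r by (intro mult_right_mono divide_right_mono) auto
    also have "\<dots> = s/36 * r^3" using s by (simp add: field_simps power2_eq_square power3_eq_cube)
    finally have "dg * r \<le> s/36 * r^3" using dg_r by linarith
    moreover have "dH/2 * r^2 \<le> (s * r / 9)/2 * r^2" using d r by (intro mult_right_mono) auto
    hence "dH/2 * r^2 \<le> s/18 * r^3" by (simp add: power2_eq_square power3_eq_cube)
    moreover have "0 \<le> dH^3 / s^2" using dH by simp
    ultimately show ?thesis by linarith
  qed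
qed

lemma cube_le_of_le_min_mult:
  fixes d a b c :: real
  assumes "0 \<le> d" "d \<le> min a b * c" "0 \<le> c"
  shows "d^3 \<le> a^2 * b * c^3"
proof -
  have "d \<le> a * c" using assms by (meson min.cobounded1 mult_right_mono order_trans)
  moreover have "d \<le> b * c" using assms by (meson min.cobounded2 mult_right_mono order_trans)
  ultimately have "d^2 * d \<le> (a * c)^2 * (b * c)" using assms by (intro mult_mono power_mono) auto
  thus ?thesis by (simp add: power2_eq_square power3_eq_cube mult_ac)
qed

lemma step_value_sub_model_le:
  fixes g G e hv :: "'v::euclidean_space"
  assumes taylor: "\<bar>f_new - f_old - g \<bullet> e - 1/2 * (hv \<bullet> e)\<bar> \<le> 1/2 * L * norm e ^ 3"
    and grad_err: "norm (G - g) \<le> dg" and hess_err: "norm (H e - hv) \<le> dH * norm e"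
  shows "f_new - (f_old + cmodel G H s e) \<le> dg * norm e + dH/2 * norm e ^ 2 + (L/2 - s/3) * norm e ^ 3"
proof -
  have "(g - G) \<bullet> e \<le> norm (G - g) * norm e"
    using Cauchy_Schwarz_ineq2[of "g - G" e] by (simp add: norm_minus_commute)
  also have "\<dots> \<le> dg * norm e" using grad_err by (intro mult_right_mono) auto
  finally have grad: "(g - G) \<bullet> e \<le> dg * norm e" .
  have "(hv - H e) \<bullet> e \<le> norm (H e - hv) * norm e"
    using Cauchy_Schwarz_ineq2[of "hv - H e" e] by (simp add: norm_minus_commute)
  also have "\<dots> \<le> dH * norm e * norm e" using hess_err by (intro mult_right_mono) auto
  finally have hess: "(hv - H e) \<bullet> e \<le> dH * norm e ^ 2" by (simp add: power2_eq_square)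
  have "f_new - (f_old + cmodel G H s e) = (f_new - f_old - g \<bullet> e - 1/2 * (hv \<bullet> e))
          + (g - G) \<bullet> e + 1/2 * ((hv - H e) \<bullet> e) - s/3 * norm e ^ 3"
    by (simp add: cmodel_def inner_diff_left algebra_simps)
  also have "\<dots> \<le> 1/2 * L * norm e ^ 3 + dg * norm e + 1/2 * (dH * norm e ^ 2) - s/3 * norm e ^ 3"
    using abs_le_D1[OF taylor] grad hess by linarith
  finally show ?thesis by (simp add: algebra_simps)
qed

lemma model_decrease_cases:
  fixes G u eta :: "'v::euclidean_space"
  assumes lin: "linear H" and s: "0 < s" and K: "\<forall>v. norm v \<le> 1 \<longrightarrow> v \<bullet> H v \<le> K"
    and eps: "0 < eps_g" "0 < eps_H" and nu: "0 < nu"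
    and nostop: "\<not> (norm G \<le> eps_g \<and> lambda_min H \<ge> - eps_H)"
    and eig: "lambda_min H < 0 \<longrightarrow> u \<bullet> H u \<le> nu * lambda_min H * norm u ^ 2
                \<and> nu * lambda_min H * norm u ^ 2 < 0 \<and> G \<bullet> u \<le> 0"
    and cauchy: "\<forall>a\<ge>0. (\<forall>b\<ge>0. cmodel G H s (- (a *\<^sub>R G)) \<le> cmodel G H s (- (b *\<^sub>R G)))
                   \<longrightarrow> - cmodel G H s eta \<ge> - cmodel G H s (- (a *\<^sub>R G))"
    and eigen: "lambda_min H < 0 \<longrightarrow> (\<forall>a\<ge>0. (\<forall>b\<ge>0. cmodel G H s (a *\<^sub>R u) \<le> cmodel G H s (b *\<^sub>R u))
                   \<longrightarrow> - cmodel G H s eta \<ge> - cmodel G H s (a *\<^sub>R u))"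
  shows "(eps_g < norm G \<and> (\<forall>t\<ge>0. t * norm G - t^2/2 * K - s/3 * t^3 \<le> - cmodel G H s eta))
      \<or> (nu * eps_H)^3 / (6 * s^2) \<le> - cmodel G H s eta"
proof (cases "eps_g < norm G")
  case True
  hence "G \<noteq> 0" using eps by auto
  thus ?thesis using True cauchy_point_decrease[OF lin s _ K cauchy] by blast
next
  case False
  hence lam: "lambda_min H < - eps_H" using nostop by auto
  hence "lambda_min H < 0" using eps by linarith
  hence u: "u \<bullet> H u \<le> nu * lambda_min H * norm u ^ 2" "nu * lambda_min H * norm u ^ 2 < 0" "G \<bullet> u \<le> 0"
    and better: "\<forall>a\<ge>0. (\<forall>b\<ge>0. cmodel G H s (a *\<^sub>R u) \<le> cmodel G H s (b *\<^sub>R u))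
                   \<longrightarrow> - cmodel G H s (a *\<^sub>R u) \<le> - cmodel G H s eta"
    using eig eigen by auto
  have u0: "u \<noteq> 0" using u(2) by auto
  have "nu * eps_H * norm u ^ 2 \<le> nu * (- lambda_min H) * norm u ^ 2"
    using lam nu by (intro mult_right_mono mult_left_mono) auto
  also have "\<dots> \<le> - (H u \<bullet> u)" using u(1) by (simp add: inner_commute)
  finally have "nu * eps_H * norm u ^ 2 \<le> - (H u \<bullet> u)" .
  hence "(nu * eps_H)^3 / (6 * s^2) \<le> - cmodel G H s eta"
    using eigenpoint_decrease[OF lin s u0 u(3) better] u0 s nu eps
    by (intro eigen_cubic_ge_cube[where n = "norm u"]) auto
  thus ?thesis ..
qed

lemma tolerance_le_model_decrease:
  fixes D g K s eps_g eps_H nu rho dH :: real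
  assumes cases: "(eps_g < g \<and> (\<forall>t\<ge>0. t * g - t^2/2 * K - s/3 * t^3 \<le> D))
                  \<or> (nu * eps_H)^3 / (6 * s^2) \<le> D"
    and pos: "0 < s" "0 < K" "0 < eps_g" "0 < nu" "0 < eps_H" "0 < dH" and rho: "rho < 1"
    and dH: "dH \<le> min (min (1/18) ((1 - rho) / 9) * (sqrt (K^2 + 4 * s * eps_g) - K))
                       (min (1/9) (2 * (1 - rho) / 9) * nu * eps_H)"
  shows "243/4 * dH^3 / s^2 \<le> (1 - rho) * D"
  using cases
proof
  assume grad: "eps_g < g \<and> (\<forall>t\<ge>0. t * g - t^2/2 * K - s/3 * t^3 \<le> D)"
  define v where "v = sqrt (K^2 + 4 * s * eps_g) - K"
  have "sqrt (K^2) \<le> sqrt (K^2 + 4 * s * eps_g)" using pos by (intro real_sqrt_le_mono) auto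
  hence "0 \<le> v" using pos by (simp add: v_def)
  hence "dH^3 \<le> (1/18)^2 * ((1 - rho) / 9) * v^3"
    using dH pos rho by (intro cube_le_of_le_min_mult) (auto simp: v_def)
  hence "243/4 * dH^3 / s^2 \<le> (1 - rho) * (v^3 / (48 * s^2))"
    using pos by (simp add: field_simps)
  also have "\<dots> \<le> (1 - rho) * (v^3 / (12 * s^2))"
    using \<open>0 \<le> v\<close> pos rho by (intro mult_left_mono divide_left_mono) auto
  also have "\<dots> \<le> (1 - rho) * D"
    using grad pos rho cauchy_cubic_ge_root_cube[of g K s D eps_g] by (intro mult_left_mono) (auto simp: v_def)
  finally show ?thesis .
next
  assume eig: "(nu * eps_H)^3 / (6 * s^2) \<le> D"
  have "dH^3 \<le> (1/9)^2 * (2 * (1 - rho) / 9) * (nu * eps_H)^3"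
    using dH pos rho by (intro cube_le_of_le_min_mult) (auto simp: mult.assoc)
  hence "243/4 * dH^3 / s^2 \<le> (1 - rho) * ((nu * eps_H)^3 / (6 * s^2))"
    using pos by (simp add: field_simps)
  also have "\<dots> \<le> (1 - rho) * D" using eig rho by (intro mult_left_mono) auto
  finally show ?thesis .
qed

lemma complexity_le_model_decrease:
  fixes D g K s S eps_g eps_H nu :: real
  assumes cases: "(eps_g < g \<and> (\<forall>t\<ge>0. t * g - t^2/2 * K - s/3 * t^3 \<le> D))
                  \<or> (nu * eps_H)^3 / (6 * s^2) \<le> D"
    and pos: "0 < s" "s \<le> S" "0 < K" "0 < eps_g" "eps_g < 1" "0 < nu" "0 < eps_H"
  shows "min (nu^3 / (6 * S^2)) (1 / (2 * sqrt 3) * min (1/K) (1 / sqrt S))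
           * min (eps_g^2) (eps_H^3) \<le> D"
  using cases
proof
  assume "eps_g < g \<and> (\<forall>t\<ge>0. t * g - t^2/2 * K - s/3 * t^3 \<le> D)"
  hence "1 / (2 * sqrt 3) * min (1/K) (1 / sqrt S) * eps_g^2 \<le> D"
    using pos by (intro cauchy_cubic_ge_eps_sq[of g]) auto
  moreover have "min (nu^3 / (6 * S^2)) (1 / (2 * sqrt 3) * min (1/K) (1 / sqrt S)) * min (eps_g^2) (eps_H^3)
      \<le> 1 / (2 * sqrt 3) * min (1/K) (1 / sqrt S) * eps_g^2"
    using pos by (intro mult_mono) auto
  ultimately show ?thesis by linarith
next
  assume eig: "(nu * eps_H)^3 / (6 * s^2) \<le> D"
  have "s^2 \<le> S^2" using pos by (intro power_mono) auto
  hence "nu^3 / (6 * S^2) * eps_H^3 \<le> (nu * eps_H)^3 / (6 * s^2)"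
    using pos by (simp add: power_mult_distrib frac_le)
  moreover have "min (nu^3 / (6 * S^2)) (1 / (2 * sqrt 3) * min (1/K) (1 / sqrt S)) * min (eps_g^2) (eps_H^3)
      \<le> nu^3 / (6 * S^2) * eps_H^3"
    using pos by (intro mult_mono) auto
  ultimately show ?thesis using eig by linarith
qed

lemma ratio_ge_if_regularization_large:
  fixes g G e hv :: "'v::euclidean_space"
  assumes taylor: "\<bar>f_new - f_old - g \<bullet> e - 1/2 * (hv \<bullet> e)\<bar> \<le> 1/2 * L * norm e ^ 3"
    and grad_err: "norm (G - g) \<le> dg" and hess_err: "norm (H e - hv) \<le> dH * norm e"
    and dg: "dg \<le> 9 * dH^2 / (4 * s)" and pos: "0 < s" "0 < dH" and large: "2 * L \<le> s"
    and rho: "rho < 1" and tolerance: "243/4 * dH^3 / s^2 \<le> (1 - rho) * - cmodel G H s e"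
  shows "rho \<le> (f_old - f_new) / - cmodel G H s e"
proof -
  define D where "D = - cmodel G H s e"
  have "0 < 243/4 * dH^3 / s^2" using pos by simp
  hence "0 < (1 - rho) * D" using tolerance unfolding D_def by linarith
  hence D: "0 < D" using rho by (simp add: zero_less_mult_iff)
  have "(L/2 - s/3) * norm e ^ 3 \<le> - s/12 * norm e ^ 3" using large by (intro mult_right_mono) auto
  hence "f_new - (f_old + cmodel G H s e) \<le> dg * norm e + dH/2 * norm e ^ 2 - s/12 * norm e ^ 3"
    using step_value_sub_model_le[where H = H and s = s, OF taylor grad_err hess_err] by linarith
  also have "\<dots> \<le> 243/4 * dH^3 / s^2" using dg pos by (intro cubic_error_le) auto
  finally have "rho * D \<le> f_old - f_new" using tolerance unfolding D_def by (simp add: algebra_simps)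
  hence "rho \<le> (f_old - f_new) / D" using D by (simp add: pos_le_divide_eq)
  thus ?thesis by (simp add: D_def)
qed

lemma regularization_bounded:
  fixes sigma :: "nat \<Rightarrow> real"
  assumes init: "0 < sigma 0" "sigma 0 \<le> gamma * S" and gamma: "1 < gamma"
    and update: "\<forall>k\<le>N. (P k \<longrightarrow> sigma (Suc k) = sigma k / gamma) \<and> (\<not> P k \<longrightarrow> sigma (Suc k) = gamma * sigma k)"
    and large: "\<forall>k\<le>N. 0 < sigma k \<longrightarrow> S \<le> sigma k \<longrightarrow> P k"
    and k: "k \<le> Suc N"
  shows "0 < sigma k \<and> sigma k \<le> gamma * S"
  using k
proof (induction k)
  case 0
  thus ?case using init by simp
next
  case (Suc k)
  hence k: "k \<le> N" and IH: "0 < sigma k" "sigma k \<le> gamma * S" by auto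
  show ?case
  proof (cases "P k")
    case True
    hence "sigma (Suc k) = sigma k / gamma" using update k by auto
    moreover have "sigma k / gamma \<le> sigma k" using IH gamma by (simp add: divide_le_eq)
    ultimately show ?thesis using IH gamma by simp
  next
    case False
    hence "sigma (Suc k) = gamma * sigma k" and "sigma k < S" using update large k IH by force+
    moreover have "gamma * sigma k \<le> gamma * S" using \<open>sigma k < S\<close> gamma by simp
    ultimately show ?thesis using IH gamma by simp
  qed
qed

lemma card_le_of_sufficient_decrease:
  fixes F :: "nat \<Rightarrow> real"
  assumes c: "0 < c"
    and decrease: "\<forall>k\<le>N. P k \<longrightarrow> c \<le> F k - F (Suc k)"
    and nonincrease: "\<forall>k\<le>N. \<not> P k \<longrightarrow> F (Suc k) \<le> F k"
    and lower: "F_min \<le> F (Suc N)"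
  shows "real (card {k. k \<le> N \<and> P k}) \<le> (F 0 - F_min) / c"
proof -
  have "real (card {k. k < n \<and> P k}) * c \<le> F 0 - F n" if "n \<le> Suc N" for n
    using that
  proof (induction n)
    case 0
    thus ?case by simp
  next
    case (Suc n)
    have "{k. k < Suc n \<and> P k} = (if P n then insert n {k. k < n \<and> P k} else {k. k < n \<and> P k})"
      by (auto simp: less_Suc_eq)
    thus ?case using Suc decrease nonincrease by (auto simp: algebra_simps)
  qed
  from this[of "Suc N"] have "real (card {k. k \<le> N \<and> P k}) * c \<le> F 0 - F_min"
    using lower by (simp add: less_Suc_eq_le)
  thus ?thesis using c by (simp add: pos_le_divide_eq)
qed

theorem lemma3p8:
  fixes f :: "'m \<Rightarrow> real"
    and R :: "'m \<Rightarrow> 'v::euclidean_space \<Rightarrow> 'm"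
    and x :: "nat \<Rightarrow> 'm" and sigma :: "nat \<Rightarrow> real"
    and G :: "nat \<Rightarrow> 'v" and H :: "nat \<Rightarrow> 'v \<Rightarrow> 'v"
    and eta :: "nat \<Rightarrow> 'v" and u :: "nat \<Rightarrow> 'v"
    and eps_g eps_H rho_TH gamma nu L_H K_H delta_g delta_H f_min :: real
    and N :: nat
  defines "m \<equiv> (\<lambda>k. cmodel (G k) (H k) (sigma k))"
  defines "rho \<equiv> (\<lambda>k. (f (x k) - f (R (x k) (eta k))) / (- m k (eta k)))"
  assumes R0: "\<forall>y. R y 0 = y"
    and C2: "\<forall>y v. ((\<lambda>w. f (R y w)) has_derivative (\<lambda>h. grad_at (\<lambda>w. f (R y w)) v \<bullet> h)) (at v)
                 \<and> (grad_at (\<lambda>w. f (R y w)) has_derivative hess_at (\<lambda>w. f (R y w)) v) (at v)"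
    and C2cont: "\<forall>y h. continuous_on UNIV (\<lambda>v. hess_at (\<lambda>w. f (R y w)) v h)"
    and params: "0 < eps_g" "eps_g < 1" "0 < eps_H" "eps_H < 1" "0 < rho_TH" "rho_TH < 1"
      "1 < gamma" "0 < nu" "nu < 1"
    and sigma0: "0 < sigma 0" "sigma 0 \<le> 2 * gamma * L_H"
    and Hsa: "\<forall>k\<le>N. self_adjoint (H k)"
    and nostop: "\<forall>k\<le>N. \<not> (norm (G k) \<le> eps_g \<and> lambda_min (H k) \<ge> - eps_H)"
    and update: "\<forall>k\<le>N. (rho k \<ge> rho_TH \<longrightarrow> x (Suc k) = R (x k) (eta k) \<and> sigma (Suc k) = sigma k / gamma)
                      \<and> (rho k < rho_TH \<longrightarrow> x (Suc k) = x k \<and> sigma (Suc k) = gamma * sigma k)"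
    and eig: "\<forall>k\<le>N. lambda_min (H k) < 0 \<longrightarrow>
                u k \<bullet> H k (u k) \<le> nu * lambda_min (H k) * norm (u k) ^ 2
              \<and> nu * lambda_min (H k) * norm (u k) ^ 2 < 0 \<and> G k \<bullet> u k \<le> 0"
    and A1: "L_H > 0" "\<forall>k\<le>N. \<bar>f (R (x k) (eta k)) - f (x k) - rgrad f R (x k) \<bullet> eta k
               - 1/2 * (rhess f R (x k) (eta k) \<bullet> eta k)\<bar> \<le> 1/2 * L_H * norm (eta k) ^ 3"
    and A2: "K_H > 0" "\<forall>k\<le>N. \<forall>v. norm v \<le> 1 \<longrightarrow> v \<bullet> H k v \<le> K_H"
    and A3: "0 < delta_g" "delta_g < 1" "0 < delta_H" "delta_H < 1"
      "\<forall>k\<le>N. norm (G k - rgrad f R (x k)) \<le> delta_g"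
      "\<forall>k\<le>N. norm (H k (eta k) - rhess f R (x k) (eta k)) \<le> delta_H * norm (eta k)"
    and A4C: "\<forall>k\<le>N. \<forall>a\<ge>0. (\<forall>b\<ge>0. m k (- (a *\<^sub>R G k)) \<le> m k (- (b *\<^sub>R G k)))
                 \<longrightarrow> - m k (eta k) \<ge> - m k (- (a *\<^sub>R G k))"
    and A4E: "\<forall>k\<le>N. lambda_min (H k) < 0 \<longrightarrow> (\<forall>a\<ge>0. (\<forall>b\<ge>0. m k (a *\<^sub>R u k) \<le> m k (b *\<^sub>R u k))
                 \<longrightarrow> - m k (eta k) \<ge> - m k (a *\<^sub>R u k))"
    and dg: "\<forall>k\<le>N. delta_g \<le> 9 * delta_H ^ 2 / (4 * sigma k)"
    and dH: "\<forall>k\<le>N. delta_H \<le> min (min (1/18) ((1 - rho_TH) / 9) * (sqrt (K_H ^ 2 + 4 * sigma k * eps_g) - K_H))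
                                   (min (1/9) (2 * (1 - rho_TH) / 9) * nu * eps_H)"
    and fmin: "\<exists>y. f y = f_min" "\<forall>y. f_min \<le> f y"
  shows "real (card {k. k \<le> N \<and> rho k \<ge> rho_TH}) \<le>
     (f (x 0) - f_min) / (rho_TH * min (nu ^ 3 / (24 * gamma ^ 2 * L_H ^ 2))
                                        (1 / (2 * sqrt 3) * min (1 / K_H) (1 / sqrt (2 * gamma * L_H))))
       * max (1 / eps_g ^ 2) (1 / eps_H ^ 3) + 1"
proof -
  define D where "D k = - m k (eta k)" for k
  define kappa where "kappa = min (nu ^ 3 / (24 * gamma ^ 2 * L_H ^ 2))
                                   (1 / (2 * sqrt 3) * min (1 / K_H) (1 / sqrt (2 * gamma * L_H)))"
  define c where "c = rho_TH * (kappa * min (eps_g ^ 2) (eps_H ^ 3))"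
  have rho_eq: "rho k = (f (x k) - f (R (x k) (eta k))) / D k" for k
    by (simp add: rho_def D_def)
  have decrease_cases: "(eps_g < norm (G k) \<and> (\<forall>t\<ge>0. t * norm (G k) - t^2/2 * K_H - sigma k/3 * t^3 \<le> D k))
      \<or> (nu * eps_H)^3 / (6 * sigma k ^ 2) \<le> D k" if k: "k \<le> N" and s: "0 < sigma k" for k
    using Hsa A2(2) params nostop eig A4C A4E k s unfolding D_def m_def
    by (intro model_decrease_cases) (auto simp: self_adjoint_def)
  have tolerance: "243/4 * delta_H^3 / sigma k ^ 2 \<le> (1 - rho_TH) * D k"
    if "k \<le> N" "0 < sigma k" for k
    using dH that A2(1) A3(3) params by (intro tolerance_le_model_decrease[OF decrease_cases[OF that]]) auto
  have large_successful: "rho_TH \<le> rho k" if "k \<le> N" "0 < sigma k" "2 * L_H \<le> sigma k" for k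
    unfolding rho_def m_def using A1(2) A3 dg tolerance[OF that(1,2)] that params
    by (intro ratio_ge_if_regularization_large[where g = "rgrad f R (x k)" and hv = "rhess f R (x k) (eta k)"
          and L = L_H and dg = delta_g and dH = delta_H]) (auto simp: D_def m_def)
  have sigma_bounded: "0 < sigma k \<and> sigma k \<le> 2 * gamma * L_H" if "k \<le> N" for k
    using regularization_bounded[of sigma gamma "2 * L_H" N "\<lambda>k. rho_TH \<le> rho k" k]
      sigma0 params update large_successful that by (auto simp: mult_ac not_le)
  have kappa_pos: "0 < kappa * min (eps_g ^ 2) (eps_H ^ 3)"
    using params A1(1) A2(1) by (simp add: kappa_def)
  have model_decrease: "kappa * min (eps_g ^ 2) (eps_H ^ 3) \<le> D k" if "k \<le> N" for k
    using complexity_le_model_decrease[OF decrease_cases[OF that], of "2 * gamma * L_H"]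
      sigma_bounded[OF that] params A2(1) by (simp add: kappa_def power_mult_distrib)
  have sufficient_decrease: "c \<le> f (x k) - f (x (Suc k))" if k: "k \<le> N" and succ: "rho_TH \<le> rho k" for k
  proof -
    have "c \<le> rho_TH * D k" using model_decrease[OF k] params unfolding c_def by (intro mult_left_mono) auto
    also have "\<dots> \<le> f (x k) - f (R (x k) (eta k))"
      using succ model_decrease[OF k] kappa_pos by (simp add: rho_eq pos_le_divide_eq)
    also have "\<dots> = f (x k) - f (x (Suc k))" using update k succ by auto
    finally show ?thesis .
  qed
  have "real (card {k. k \<le> N \<and> rho k \<ge> rho_TH}) \<le> (f (x 0) - f_min) / c"
    using sufficient_decrease update fmin(2) params A1(1) A2(1)
    by (intro card_le_of_sufficient_decrease) (auto simp: c_def kappa_def)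
  also have "\<dots> = (f (x 0) - f_min) / (rho_TH * kappa) * max (1 / eps_g ^ 2) (1 / eps_H ^ 3)"
    using params by (simp add: c_def min_def max_def field_simps)
  finally show ?thesis unfolding kappa_def by linarith
qed

end
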